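(* Let $X$ be a separable absolutely strongly star-Menger space. If $Y$ is a closed and discrete subset of $X$, then $|Y|<\mathfrak{d}$.
   Context: All spaces are regular. $St(A,\mathcal{U})=\bigcup\{U\in\mathcal{U}:U\cap A\neq\emptyset\}$. $\mathfrak{d}$ is the dominating number. $X$ is absolutely strongly star-Menger if for each sequence $(\mathcal{U}_n:n\in\omega)$ of open covers and each dense subset $D$ of $X$ there are finite sets $F_n\subseteq D$ ($n\in\omega$) such that $\{St(F_n,\mathcal{U}_n):n\in\omega\}$ covers $X$. *)

theory Defs
  imports "HOL-Analysis.Analysis" "HOL-Library.Equipollence"
begin

definition St :: "'a set \<Rightarrow> 'a set set \<Rightarrow> 'a set" where
  "St A \<U> = \<Union>{U \<in> \<U>. U \<inter> A \<noteq> {}}"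

definition open_cover :: "'a topology \<Rightarrow> 'a set set \<Rightarrow> bool" where
  "open_cover X \<U> \<longleftrightarrow> (\<forall>U\<in>\<U>. openin X U) \<and> \<Union>\<U> = topspace X"

definition abs_strongly_star_Menger :: "'a topology \<Rightarrow> bool" where
  "abs_strongly_star_Menger X \<longleftrightarrow>
     (\<forall>\<U> :: nat \<Rightarrow> 'a set set. \<forall>D.
        (\<forall>n. open_cover X (\<U> n)) \<and> D \<subseteq> topspace X \<and> X closure_of D = topspace X
        \<longrightarrow> (\<exists>F :: nat \<Rightarrow> 'a set. (\<forall>n. finite (F n) \<and> F n \<subseteq> D) \<and>
                  topspace X \<subseteq> (\<Union>n. St (F n) (\<U> n))))"

definition eventually_le :: "(nat \<Rightarrow> nat) \<Rightarrow> (nat \<Rightarrow> nat) \<Rightarrow> bool" where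
  "eventually_le f g \<longleftrightarrow> (\<forall>\<^sub>F n in sequentially. f n \<le> g n)"

definition dominating :: "(nat \<Rightarrow> nat) set \<Rightarrow> bool" where
  "dominating \<F> \<longleftrightarrow> (\<forall>f. \<exists>g\<in>\<F>. eventually_le f g)"

text \<open>|Y| < \<d>: Y is strictly smaller than every dominating family
  (equivalent to |Y| < min{|F| : F dominating}, cardinals being well-ordered).\<close>
definition card_less_dominating :: "'a set \<Rightarrow> bool" where
  "card_less_dominating Y \<longleftrightarrow> (\<forall>\<F>. dominating \<F> \<longrightarrow> Y \<prec> \<F>)"

end

theory Submission
  imports Defs
begin

text \<open>Enumerate a countable dense set as \<open>d 0, d 1, \<dots>\<close> and let \<open>W y\<close> isolate each
  point \<open>y\<close> of the closed discrete set \<open>Y\<close>. Every \<open>f : Y \<rightarrow> \<omega>\<^sup>\<omega>\<close> yields open covers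
  \<open>U\<^sub>n\<close>: the complement of \<open>Y\<close> together with the sets \<open>W y\<close> punctured at the points
  \<open>d j \<noteq> y\<close> with \<open>j \<le> f y n\<close>. Applying the absolute strong star-Menger property to the
  tails \<open>(U\<^sub>n\<^sub>+\<^sub>k)\<^sub>n\<close> of this sequence gives countably many sequences of finite subsets
  of the dense set, and their enumeration indices combine, by a diagonal sum, into a single
  \<open>G \<in> \<omega>\<^sup>\<omega>\<close>. If \<open>f y\<close> eventually dominated \<open>G\<close>, the finite set whose star catches \<open>y\<close>
  could only meet the punctured set \<open>W y\<close> in \<open>y\<close> itself, putting \<open>y\<close> into the dense set,
  which a second diagonal summand of \<open>G\<close> rules out.\<close>

lemma finite_subset_range_imp_subset_image_atMost:
  fixes d :: "nat \<Rightarrow> 'a"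
  assumes "finite S" "S \<subseteq> range d"
  shows "\<exists>b. S \<subseteq> d ` {..b}"
proof -
  obtain C where C: "finite C" "S = d ` C"
    using finite_subset_image[OF assms] by blast
  obtain b where "C \<subseteq> {..b}"
    using finite_nat_iff_bounded_le[THEN iffD1, OF C(1)] by blast
  then have "S \<subseteq> d ` {..b}"
    using C(2) by (simp add: image_mono)
  then show ?thesis ..
qed

lemma closed_discrete_isolating_opens:
  assumes "subtopology X Y = discrete_topology Y"
  obtains W where "\<And>y. y \<in> Y \<Longrightarrow> openin X (W y) \<and> W y \<inter> Y = {y}"
proof -
  have "\<exists>W. openin X W \<and> W \<inter> Y = {y}" if "y \<in> Y" for y
  proof -
    have "openin (subtopology X Y) {y}"
      using assms that by simp
    then obtain W where "openin X W" "{y} = W \<inter> Y"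
      by (auto simp: openin_subtopology)
    then show ?thesis
      by blast
  qed
  then show thesis
    using that by metis
qed

definition punctured_cover ::
    "'a topology \<Rightarrow> 'a set \<Rightarrow> ('a \<Rightarrow> 'a set) \<Rightarrow> (nat \<Rightarrow> 'a) \<Rightarrow> ('a \<Rightarrow> nat) \<Rightarrow> 'a set set" where
  "punctured_cover X Y W d b =
     insert (topspace X - Y) ((\<lambda>y. W y - (d ` {..b y} - {y})) ` Y)"

lemma open_cover_punctured_cover:
  assumes "t1_space X" "closedin X Y"
    and W: "\<And>y. y \<in> Y \<Longrightarrow> openin X (W y) \<and> W y \<inter> Y = {y}"
    and "range d \<subseteq> topspace X"
  shows "open_cover X (punctured_cover X Y W d b)"
proof -
  have "closedin X (d ` {..b y} - {y})" for y
  proof -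
    have "finite (d ` {..b y} - {y})" "d ` {..b y} - {y} \<subseteq> topspace X"
      using assms(4) by auto
    then show ?thesis
      using assms(1) t1_space_closedin_finite by metis
  qed
  then have "openin X (W y - (d ` {..b y} - {y}))" if "y \<in> Y" for y
    using W that by (simp add: openin_diff)
  moreover have "y \<in> W y - (d ` {..b y} - {y})" if "y \<in> Y" for y
    using W that by blast
  moreover have "openin X (topspace X - Y)"
    using assms(2) by (simp add: openin_diff)
  ultimately show ?thesis
    unfolding open_cover_def punctured_cover_def using openin_subset by fastforce
qed

lemma mem_star_punctured_cover_imp_mem:
  assumes W: "\<And>y. y \<in> Y \<Longrightarrow> W y \<inter> Y = {y}"
    and "y \<in> Y" "y \<in> St F (punctured_cover X Y W d b)" "F \<subseteq> d ` {..b y}"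
  shows "y \<in> F"
proof -
  obtain V z where V: "V \<in> punctured_cover X Y W d b" "y \<in> V" "z \<in> V" "z \<in> F"
    using assms(3) unfolding St_def by blast
  then obtain y' where y': "y' \<in> Y" "V = W y' - (d ` {..b y'} - {y'})"
    using assms(2) unfolding punctured_cover_def by auto
  have "y \<in> W y' \<inter> Y"
    using V(2) y'(2) assms(2) by simp
  then have "y' = y"
    using W[OF y'(1)] by simp
  moreover have "z \<in> d ` {..b y}"
    using assms(4) V(4) by (rule subsetD)
  ultimately show ?thesis
    using V(3,4) y'(2) by auto
qed

lemma diagonal_strict_bound:
  fixes h :: "nat \<Rightarrow> nat \<Rightarrow> nat"
  shows "\<exists>G. \<forall>k n. k \<le> n \<longrightarrow> h k n < G n"
proof (intro exI allI impI)
  fix k n :: nat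
  assume "k \<le> n"
  then have "h k n \<le> (\<Sum>i\<le>n. h i n)"
    by (intro member_le_sum) auto
  then show "h k n < (\<Sum>i\<le>n. h i n) + 1"
    by simp
qed

lemma abs_strongly_star_Menger_tails:
  fixes U :: "nat \<Rightarrow> 'a set set"
  assumes "abs_strongly_star_Menger X" "\<And>n. open_cover X (U n)"
    and "D \<subseteq> topspace X" "X closure_of D = topspace X"
  obtains F where "\<And>k n. finite (F k n)" "\<And>k n. F k n \<subseteq> D"
    and "\<And>k. topspace X \<subseteq> (\<Union>n. St (F k n) (U (n + k)))"
proof -
  have "\<exists>F. (\<forall>n. finite (F n) \<and> F n \<subseteq> D) \<and> topspace X \<subseteq> (\<Union>n. St (F n) (U (n + k)))" for k
    using assms(1)[unfolded abs_strongly_star_Menger_def, rule_format, of "\<lambda>n. U (n + k)" D]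
      assms(2-4) by blast
  then have "\<forall>k. \<exists>F. (\<forall>n. finite (F n) \<and> F n \<subseteq> D) \<and> topspace X \<subseteq> (\<Union>n. St (F n) (U (n + k)))"
    by blast
  then obtain F where "\<forall>k. (\<forall>n. finite (F k n) \<and> F k n \<subseteq> D) \<and>
      topspace X \<subseteq> (\<Union>n. St (F k n) (U (n + k)))"
    by (rule choice[THEN exE])
  then show thesis
    using that by blast
qed

lemma closed_discrete_not_dominating:
  assumes "t1_space X" "separable_space X" "abs_strongly_star_Menger X"
    and "closedin X Y" "subtopology X Y = discrete_topology Y"
  shows "\<not> dominating (f ` Y)"
proof
  assume dom: "dominating (f ` Y)"
  have Y_sub: "Y \<subseteq> topspace X"
    using assms(4) by (rule closedin_subset)
  obtain C where C: "countable C" "C \<subseteq> topspace X" "X closure_of C = topspace X"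
    using assms(2) unfolding separable_space_def by blast
  have "Y \<noteq> {}"
  proof
    assume "Y = {}"
    with dom show False
      unfolding dominating_def by simp
  qed
  have "C \<noteq> {}"
  proof
    assume "C = {}"
    then have "topspace X = {}"
      using C(3) by simp
    with Y_sub \<open>Y \<noteq> {}\<close> show False
      by blast
  qed
  define d where "d = from_nat_into C"
  have range_d: "range d = C"
    unfolding d_def using C(1) \<open>C \<noteq> {}\<close> by (simp add: range_from_nat_into)
  obtain W where W: "\<And>y. y \<in> Y \<Longrightarrow> openin X (W y) \<and> W y \<inter> Y = {y}"
    using closed_discrete_isolating_opens[OF assms(5)] by blast
  define U where "U n = punctured_cover X Y W d (\<lambda>y. f y n)" for n
  have "range d \<subseteq> topspace X"
    using range_d C(2) by simp
  with assms(1,4) W have U_cover: "open_cover X (U n)" for n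
    unfolding U_def by (rule open_cover_punctured_cover)
  obtain FF where FF: "\<And>k n. finite (FF k n)" "\<And>k n. FF k n \<subseteq> C"
    and FF_covers: "\<And>k. topspace X \<subseteq> (\<Union>n. St (FF k n) (U (n + k)))"
    using abs_strongly_star_Menger_tails[of X U C, OF assms(3) U_cover C(2,3)] by blast
  define ix where "ix S = (SOME b. S \<subseteq> d ` {..b})" for S
  have ix: "FF k n \<subseteq> d ` {..ix (FF k n)}" for k n
    unfolding ix_def
    by (rule someI_ex, rule finite_subset_range_imp_subset_image_atMost) (use FF range_d in auto)
  obtain G where G: "\<And>k n. k \<le> n \<Longrightarrow>
      ix (FF k (n - k)) + (if d k \<in> Y then f (d k) n else 0) < G n"
    using diagonal_strict_bound[of "\<lambda>k n. ix (FF k (n - k)) + (if d k \<in> Y then f (d k) n else 0)"]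
    by blast
  obtain g where "g \<in> f ` Y" "eventually_le G g"
    using dom unfolding dominating_def by blast
  then obtain y N where y: "y \<in> Y" and N: "\<And>n. n \<ge> N \<Longrightarrow> G n \<le> f y n"
    unfolding eventually_le_def eventually_sequentially by blast
  have "y \<notin> C"
  proof
    assume "y \<in> C"
    then obtain j where "y = d j"
      using range_d by blast
    then have "f y (max j N) < G (max j N)"
      using G[of j "max j N"] y by simp
    then show False
      using N[of "max j N"] by simp
  qed
  have "y \<in> topspace X"
    using y Y_sub by blast
  then obtain m where m: "y \<in> St (FF N m) (U (m + N))"
    using FF_covers[of N] by blast
  have "ix (FF N m) \<le> f y (m + N)"
    using G[of N "m + N"] N[of "m + N"] by simp
  then have "d ` {..ix (FF N m)} \<subseteq> d ` {..f y (m + N)}"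
    by (simp add: image_mono)
  then have "FF N m \<subseteq> d ` {..f y (m + N)}"
    using ix[of N m] by (rule subset_trans[rotated])
  then have "y \<in> FF N m"
    using mem_star_punctured_cover_imp_mem[of Y W y "FF N m"] W y m unfolding U_def by blast
  then show False
    using FF(2) \<open>y \<notin> C\<close> by blast
qed

lemma not_lesspoll_imp_lepoll: "\<not> A \<prec> B \<Longrightarrow> B \<lesssim> A"
proof -
  assume "\<not> A \<prec> B"
  moreover have "A \<lesssim> B \<or> B \<lesssim> A"
    by (metis card_of_Well_order card_of_ordLeq lepoll_def ordLeq_total)
  ultimately show ?thesis
    unfolding lesspoll_def by (meson eqpoll_sym eqpoll_imp_lepoll)
qed

lemma dominating_mono: "dominating \<F> \<Longrightarrow> \<F> \<subseteq> \<G> \<Longrightarrow> dominating \<G>"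
  unfolding dominating_def by blast

theorem mainTheorem9:
  fixes X :: "'a topology" and Y :: "'a set"
  assumes "regular_space X" and "t1_space X"
    and "separable_space X"
    and "abs_strongly_star_Menger X"
    and "closedin X Y"
    and "subtopology X Y = discrete_topology Y"
  shows "card_less_dominating Y"
  unfolding card_less_dominating_def
proof (intro allI impI)
  fix \<F> :: "(nat \<Rightarrow> nat) set"
  assume "dominating \<F>"
  show "Y \<prec> \<F>"
  proof (rule ccontr)
    assume "\<not> Y \<prec> \<F>"
    then obtain f where "\<F> \<subseteq> f ` Y"
      using not_lesspoll_imp_lepoll unfolding lepoll_iff by blast
    with \<open>dominating \<F>\<close> have "dominating (f ` Y)"
      by (rule dominating_mono)
    with closed_discrete_not_dominating[OF assms(2-6)] show False
      by contradiction
  qed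
qed

end
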